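(* Let $G:\mathbb{R}^d\to\mathbb{R}$ be convex and $L$-smooth, let $B\in\mathbb{R}^{s\times d}$ and $b$ in the column space of $B$, and let $u^0\in\mathbb{R}^d$, $R>0$, $\varepsilon>0$. Define $G^{\nu}(u)=G(u)+\frac{\nu}{2}\|u^0-u\|^2$ with $\nu=\varepsilon/R^2$. Suppose there exist $u^*\in\operatorname{Argmin}_{u:Bu=b}G(u)$ and $u^*_\nu=\operatorname{argmin}_{u:Bu=b}G^\nu(u)$, that $\min_u G(u)$ exists, and let $D=G(u^* )-\min_uG(u)$. Assume $\|u^0-u^*\|^2\le R^2$ and set $$\delta=\frac{\varepsilon^2}{32\big(D+\frac\varepsilon2\big)\big(L+\frac{\varepsilon}{R^2}\big)}.$$ If $u\in\mathbb{R}^d$ satisfies $\|u-u^*_\nu\|^2\le\delta$, then $G(u)-G(u^* )\le\varepsilon$ and $\|Bu-b\|^2\le\delta\,\sigma_{\max}^2(B)$.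
   Context: $G$ is $L$-smooth if it is differentiable and $G(u')-G(u)-\langle\nabla G(u),u'-u\rangle\le\frac L2\|u'-u\|^2$ for all $u,u'$. $\sigma_{\max}(B)$ is the largest singular value of $B$. *)

theory Defs
  imports "HOL-Analysis.Analysis"
begin

text \<open>L-smoothness: differentiable everywhere and
  G u' - G u - <grad G u, u' - u> <= L/2 ||u' - u||^2, where the inner product with the
  gradient is the Frechet derivative of G at u applied to u' - u.\<close>
definition L_smooth :: "real \<Rightarrow> ('a::euclidean_space \<Rightarrow> real) \<Rightarrow> bool" where
  "L_smooth L G \<longleftrightarrow> (\<forall>u. G differentiable (at u)) \<and>
     (\<forall>u u'. G u' - G u - frechet_derivative G (at u) (u' - u) \<le> L / 2 * (norm (u' - u))\<^sup>2)"

definition singular_values :: "real^'d^'s \<Rightarrow> real set" where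
  "singular_values B = {\<sigma>. \<sigma> \<ge> 0 \<and>
     (\<exists>v. v \<noteq> 0 \<and> (transpose B ** B) *v v = (\<sigma>\<^sup>2) *\<^sub>R v)}"

definition sigma_max :: "real^'d^'s \<Rightarrow> real" where
  "sigma_max B = Max (singular_values B)"

end

theory Submission
  imports Defs
begin

(* Comparing the penalised minimiser u_nu with u* gives
   G u_nu <= G u* + nu/2 ||u0 - u*||^2 <= G u* + eps/2.  An L-smooth function bounded below
   by m satisfies (G'(x) h)^2 <= 2 L (G x - m) ||h||^2 (take one gradient-type step from x),
   so moving at most sqrt delta away from u_nu raises G by at most eps/2.  The residual
   B u - b = B (u - u_nu) is bounded by ||B h||^2 <= sigma_max(B)^2 ||h||^2, which holds
   because a maximiser of the Rayleigh quotient of B^T B is an eigenvector of B^T B. *)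

lemma inner_transpose_matrix_vector:
  fixes A :: "real^'n^'m"
  shows "(transpose A *v x) \<bullet> y = x \<bullet> (A *v y)"
  by (simp add: dot_lmul_matrix)

lemma symmetric_matrix_eigenvectors_orthogonal:
  fixes M :: "real^'n^'n"
  assumes "transpose M = M" and "M *v v = a *\<^sub>R v" and "M *v w = c *\<^sub>R w" and "a \<noteq> c"
  shows "v \<bullet> w = 0"
proof -
  have "a * (v \<bullet> w) = (M *v v) \<bullet> w"
    using assms(2) by simp
  also have "\<dots> = v \<bullet> (M *v w)"
    by (metis assms(1) inner_transpose_matrix_vector)
  also have "\<dots> = c * (v \<bullet> w)"
    using assms(3) by simp
  finally show ?thesis
    using assms(4) by simp
qed

lemma finite_eigenvalues_symmetric_matrix:
  fixes M :: "real^'n^'n"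
  assumes "transpose M = M"
  shows "finite {a. \<exists>v. v \<noteq> 0 \<and> M *v v = a *\<^sub>R v}" (is "finite ?E")
proof -
  define ev where "ev a = (SOME v. v \<noteq> 0 \<and> M *v v = a *\<^sub>R v)" for a
  have ev: "ev a \<noteq> 0" "M *v ev a = a *\<^sub>R ev a" if "a \<in> ?E" for a
    using someI_ex[OF that[simplified]] unfolding ev_def by blast+
  have orth: "ev a \<bullet> ev c = 0" if "a \<in> ?E" "c \<in> ?E" "a \<noteq> c" for a c
    using symmetric_matrix_eigenvectors_orthogonal[OF assms ev(2)[OF that(1)] ev(2)[OF that(2)] that(3)] .
  have inj: "inj_on ev ?E"
  proof (rule inj_onI, rule ccontr)
    fix a c
    assume "a \<in> ?E" "c \<in> ?E" "ev a = ev c" "a \<noteq> c"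
    then have "ev a \<bullet> ev a = 0"
      using orth[of a c] by simp
    with ev(1)[OF \<open>a \<in> ?E\<close>] show False
      by simp
  qed
  have "pairwise orthogonal (ev ` ?E)"
    unfolding pairwise_image pairwise_def orthogonal_def using orth by blast
  moreover have "0 \<notin> ev ` ?E"
  proof
    assume "0 \<in> ev ` ?E"
    then obtain a where "a \<in> ?E" and "ev a = 0"
      by (rule imageE) simp
    with ev(1) show False
      by simp
  qed
  ultimately have "independent (ev ` ?E)"
    by (rule pairwise_orthogonal_independent)
  then show ?thesis
    using inj finiteI_independent finite_imageD by blast
qed

lemma finite_singular_values:
  fixes B :: "real^'d^'s"
  shows "finite (singular_values B)"
proof -
  have "singular_values B \<subseteq> sqrt ` {a. \<exists>v. v \<noteq> 0 \<and> (transpose B ** B) *v v = a *\<^sub>R v}"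
    unfolding singular_values_def by (auto intro!: image_eqI[where x = "_\<^sup>2"])
  moreover have "transpose (transpose B ** B) = transpose B ** B"
    by (simp add: matrix_transpose_mul)
  ultimately show ?thesis
    using finite_eigenvalues_symmetric_matrix finite_subset by blast
qed

lemma linear_coeff_eq_0_if_quadratic_nonneg:
  fixes a b :: real
  assumes "\<And>t. 0 \<le> b * t + a * t\<^sup>2"
  shows "b = 0"
proof (rule DERIV_local_min[where d = 1])
  show "((\<lambda>t. b * t + a * t\<^sup>2) has_real_derivative b) (at 0)"
    by (auto intro!: derivative_eq_intros)
qed (use assms in auto)

lemma rayleigh_maximizer_is_eigenvector:
  fixes M :: "real^'n^'n" and x :: "real^'n"
  defines "\<mu> \<equiv> (M *v x) \<bullet> x"
  assumes "transpose M = M" and "norm x = 1"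
    and max: "\<And>y. (M *v y) \<bullet> y \<le> \<mu> * (norm y)\<^sup>2"
  shows "M *v x = \<mu> *\<^sub>R x"
proof -
  define z where "z = \<mu> *\<^sub>R x - M *v x"
  have sym: "(M *v z) \<bullet> x = (M *v x) \<bullet> z"
    by (metis assms(2) inner_commute inner_transpose_matrix_vector)
  have "0 \<le> (2 * (z \<bullet> z)) * t + (\<mu> * (norm z)\<^sup>2 - (M *v z) \<bullet> z) * t\<^sup>2" for t
  proof -
    have "\<mu> + 2 * t * ((M *v x) \<bullet> z) + t\<^sup>2 * ((M *v z) \<bullet> z) = (M *v (x + t *\<^sub>R z)) \<bullet> (x + t *\<^sub>R z)"
      using sym by (simp add: \<mu>_def matrix_vector_right_distrib matrix_vector_mult_scaleR
          inner_add_left inner_add_right power2_eq_square algebra_simps)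
    also have "\<dots> \<le> \<mu> * (norm (x + t *\<^sub>R z))\<^sup>2"
      by (rule max)
    also have "(norm (x + t *\<^sub>R z))\<^sup>2 = 1 + 2 * t * (x \<bullet> z) + t\<^sup>2 * (norm z)\<^sup>2"
      using \<open>norm x = 1\<close> norm_eq_1[of x] unfolding power2_norm_eq_inner
      by (simp add: inner_add_left inner_add_right inner_commute power2_eq_square algebra_simps)
    finally have ineq: "\<mu> + 2 * t * ((M *v x) \<bullet> z) + t\<^sup>2 * ((M *v z) \<bullet> z)
        \<le> \<mu> * (1 + 2 * t * (x \<bullet> z) + t\<^sup>2 * (norm z)\<^sup>2)" .
    have zz: "z \<bullet> z = \<mu> * (x \<bullet> z) - (M *v x) \<bullet> z"
      by (simp add: z_def inner_diff_left)
    have "\<mu> * (1 + 2 * t * (x \<bullet> z) + t\<^sup>2 * (norm z)\<^sup>2)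
        - (\<mu> + 2 * t * ((M *v x) \<bullet> z) + t\<^sup>2 * ((M *v z) \<bullet> z))
        = (2 * (z \<bullet> z)) * t + (\<mu> * (norm z)\<^sup>2 - (M *v z) \<bullet> z) * t\<^sup>2"
      unfolding zz by (simp add: algebra_simps)
    with ineq show ?thesis
      by linarith
  qed
  then have "2 * (z \<bullet> z) = 0"
    by (rule linear_coeff_eq_0_if_quadratic_nonneg)
  then have "z = 0"
    by simp
  then show ?thesis
    unfolding z_def by simp
qed

lemma rayleigh_quotient_attains_max:
  fixes M :: "real^'n^'n"
  obtains x where "norm x = 1" and "\<And>y. (M *v y) \<bullet> y \<le> ((M *v x) \<bullet> x) * (norm y)\<^sup>2"
proof -
  define q where "q y = (M *v y) \<bullet> y" for y
  have "continuous_on (sphere 0 1) q"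
    unfolding q_def by (intro continuous_intros)
  moreover have "sphere (0::real^'n) 1 \<noteq> {}"
    by (simp add: vector_choose_size)
  ultimately obtain x where x: "x \<in> sphere 0 1" and max: "\<And>y. y \<in> sphere 0 1 \<Longrightarrow> q y \<le> q x"
    using compact_sphere continuous_attains_sup by metis
  have hom: "q (c *\<^sub>R y) = c\<^sup>2 * q y" for c y
    by (simp add: q_def matrix_vector_mult_scaleR power2_eq_square)
  have "q y \<le> q x * (norm y)\<^sup>2" for y
  proof (cases "y = 0")
    case False
    then have "q y = q (norm y *\<^sub>R (y /\<^sub>R norm y))"
      by simp
    also have "\<dots> = (norm y)\<^sup>2 * q (y /\<^sub>R norm y)"
      by (rule hom)
    also have "\<dots> \<le> (norm y)\<^sup>2 * q x"
      using False by (intro mult_left_mono max) auto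
    finally show ?thesis
      by (simp add: mult.commute)
  qed (simp add: q_def)
  with x that show ?thesis
    unfolding q_def by simp
qed

lemma norm_matrix_vector_le_sigma_max:
  fixes B :: "real^'d^'s"
  shows "(norm (B *v x))\<^sup>2 \<le> (sigma_max B)\<^sup>2 * (norm x)\<^sup>2"
proof -
  define M where "M = transpose B ** B"
  have q: "(M *v y) \<bullet> y = (norm (B *v y))\<^sup>2" for y
    by (simp add: M_def dot_lmul_matrix power2_norm_eq_inner flip: matrix_vector_mul_assoc)
  obtain x0 where x0: "norm x0 = 1" and max: "\<And>y. (M *v y) \<bullet> y \<le> ((M *v x0) \<bullet> x0) * (norm y)\<^sup>2"
    using rayleigh_quotient_attains_max by blast
  define \<mu> where "\<mu> = (M *v x0) \<bullet> x0"
  have "transpose M = M"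
    by (simp add: M_def matrix_transpose_mul)
  then have "M *v x0 = \<mu> *\<^sub>R x0"
    unfolding \<mu>_def using x0 max by (rule rayleigh_maximizer_is_eigenvector)
  moreover have "\<mu> \<ge> 0"
    by (simp add: \<mu>_def q)
  ultimately have "sqrt \<mu> \<in> singular_values B"
    using x0 unfolding singular_values_def M_def by (auto intro!: exI[of _ x0])
  then have "sqrt \<mu> \<le> sigma_max B"
    unfolding sigma_max_def using finite_singular_values by (rule Max_ge[rotated])
  with \<open>\<mu> \<ge> 0\<close> have "\<mu> \<le> (sigma_max B)\<^sup>2"
    using power_mono[of "sqrt \<mu>" "sigma_max B" 2] by simp
  then show ?thesis
    using max[of x] by (simp add: q \<mu>_def mult_right_mono order_trans)
qed

lemma L_smooth_mono:
  assumes "L_smooth L G" and "L \<le> K"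
  shows "L_smooth K G"
proof -
  have "L / 2 * (norm h)\<^sup>2 \<le> K / 2 * (norm h)\<^sup>2" for h :: 'a
    using \<open>L \<le> K\<close> by (intro mult_right_mono) auto
  with assms(1) show ?thesis
    unfolding L_smooth_def by (meson order_trans)
qed

lemma L_smooth_le:
  assumes "L_smooth L G"
  shows "G y \<le> G x + frechet_derivative G (at x) (y - x) + L / 2 * (norm (y - x))\<^sup>2"
proof -
  have "G y - G x - frechet_derivative G (at x) (y - x) \<le> L / 2 * (norm (y - x))\<^sup>2"
    using assms unfolding L_smooth_def by blast
  then show ?thesis
    by linarith
qed

lemma L_smooth_linear_frechet_derivative:
  assumes "L_smooth L G"
  shows "linear (frechet_derivative G (at x))"
  using assms unfolding L_smooth_def
  by (meson frechet_derivative_works has_derivative_linear)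

lemma L_smooth_frechet_derivative_sq_le:
  fixes G :: "'a::euclidean_space \<Rightarrow> real"
  assumes smooth: "L_smooth L G" and "0 < L" and lower: "\<And>v. m \<le> G v"
  shows "(frechet_derivative G (at x) h)\<^sup>2 \<le> 2 * L * (G x - m) * (norm h)\<^sup>2"
proof (cases "h = 0")
  case True
  then show ?thesis
    using L_smooth_linear_frechet_derivative[OF smooth] by (simp add: linear_0)
next
  case False
  define g where "g = frechet_derivative G (at x) h"
  define n where "n = (norm h)\<^sup>2"
  \<comment> \<open>the step length minimising the quadratic upper bound along \<open>-h\<close>\<close>
  define t where "t = g / (L * n)"
  have "n > 0"
    using False by (simp add: n_def)
  have "frechet_derivative G (at x) (- (t *\<^sub>R h)) = - t * g"
    using L_smooth_linear_frechet_derivative[OF smooth]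
    by (simp add: g_def linear_neg linear_cmul)
  then have "m \<le> G x - t * g + L / 2 * t\<^sup>2 * n"
    using lower[of "x - t *\<^sub>R h"] L_smooth_le[OF smooth, of "x - t *\<^sub>R h" x]
    by (simp add: n_def power_mult_distrib)
  also have "\<dots> = G x - g\<^sup>2 / (2 * L * n)"
    using \<open>0 < L\<close> \<open>n > 0\<close> by (simp add: t_def field_simps power2_eq_square)
  finally have "g\<^sup>2 / (2 * L * n) \<le> G x - m"
    by simp
  then have "g\<^sup>2 \<le> (G x - m) * (2 * L * n)"
    using \<open>0 < L\<close> \<open>n > 0\<close> by (simp add: pos_divide_le_eq)
  then show ?thesis
    by (simp add: g_def n_def algebra_simps)
qed

lemma L_smooth_increment_le:
  fixes G :: "'a::euclidean_space \<Rightarrow> real"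
  assumes smooth: "L_smooth L G" and "0 < L" and lower: "\<And>v. m \<le> G v"
  shows "G (x + h) - G x \<le> sqrt (2 * L * (G x - m)) * norm h + L / 2 * (norm h)\<^sup>2"
proof -
  have "frechet_derivative G (at x) h \<le> sqrt ((frechet_derivative G (at x) h)\<^sup>2)"
    by simp
  also have "\<dots> \<le> sqrt (2 * L * (G x - m) * (norm h)\<^sup>2)"
    by (intro real_sqrt_le_mono L_smooth_frechet_derivative_sq_le[OF assms])
  also have "\<dots> = sqrt (2 * L * (G x - m)) * norm h"
    by (simp add: real_sqrt_mult)
  finally show ?thesis
    using L_smooth_le[OF smooth, of "x + h" x] by simp
qed

lemma L_smooth_increment_le_half:
  fixes G :: "'a::euclidean_space \<Rightarrow> real"
  assumes smooth: "L_smooth L G" and "L \<le> K" and lower: "\<And>v. m \<le> G v"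
    and "0 < \<epsilon>" and "\<epsilon> / 2 \<le> A" and "G x - m \<le> A"
    and close: "(norm (y - x))\<^sup>2 \<le> \<epsilon>\<^sup>2 / (32 * A * K)"
  shows "G y - G x \<le> \<epsilon> / 2"
proof (cases "K > 0")
  case False
  with \<open>0 < \<epsilon>\<close> \<open>\<epsilon> / 2 \<le> A\<close> have "\<epsilon>\<^sup>2 / (32 * A * K) \<le> 0"
    by (simp add: divide_nonneg_nonpos mult_nonneg_nonpos)
  with close have "(norm (y - x))\<^sup>2 \<le> 0"
    by linarith
  then have "y = x"
    by simp
  with \<open>0 < \<epsilon>\<close> show ?thesis
    by simp
next
  case True
  define \<delta> where "\<delta> = \<epsilon>\<^sup>2 / (32 * A * K)"
  define h where "h = y - x"
  have "A > 0"
    using \<open>0 < \<epsilon>\<close> \<open>\<epsilon> / 2 \<le> A\<close> by linarith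
  have h: "(norm h)\<^sup>2 \<le> \<delta>"
    using close by (simp add: h_def \<delta>_def)
  have "sqrt (2 * K * (G x - m)) * norm h = sqrt (2 * K * (G x - m) * (norm h)\<^sup>2)"
    by (simp add: real_sqrt_mult)
  also have "\<dots> \<le> sqrt (2 * K * A * \<delta>)"
    using True h lower[of x] \<open>G x - m \<le> A\<close>
    by (intro real_sqrt_le_mono) (simp add: mult_mono)
  also have "2 * K * A * \<delta> = (\<epsilon> / 4)\<^sup>2"
    using True \<open>A > 0\<close> by (simp add: \<delta>_def field_simps power2_eq_square)
  finally have "sqrt (2 * K * (G x - m)) * norm h \<le> \<epsilon> / 4"
    using \<open>0 < \<epsilon>\<close> by simp
  moreover have "K / 2 * (norm h)\<^sup>2 \<le> \<epsilon> / 4"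
  proof -
    have "K / 2 * (norm h)\<^sup>2 \<le> K / 2 * \<delta>"
      using True h by simp
    also have "\<dots> = \<epsilon> * \<epsilon> / (64 * A)"
      using True \<open>A > 0\<close> by (simp add: \<delta>_def field_simps power2_eq_square)
    also have "\<dots> \<le> \<epsilon> / 4"
      using \<open>0 < \<epsilon>\<close> \<open>A > 0\<close> \<open>\<epsilon> / 2 \<le> A\<close> by (simp add: pos_divide_le_eq mult_left_mono)
    finally show ?thesis .
  qed
  moreover have "G (x + h) - G x \<le> sqrt (2 * K * (G x - m)) * norm h + K / 2 * (norm h)\<^sup>2"
    using L_smooth_increment_le[OF L_smooth_mono[OF smooth \<open>L \<le> K\<close>] True lower] .
  ultimately show ?thesis
    by (simp add: h_def)
qed

theorem lemmaD2:
  fixes G :: "real^'d \<Rightarrow> real" and L R \<epsilon> :: real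
    and B :: "real^'d^'s" and b :: "real^'s"
    and u0 ustar unu umin u :: "real^'d"
  defines "\<nu> \<equiv> \<epsilon> / R\<^sup>2"
  defines "Gnu \<equiv> (\<lambda>v. G v + \<nu> / 2 * (norm (u0 - v))\<^sup>2)"
  defines "D \<equiv> G ustar - G umin"
  defines "\<delta> \<equiv> \<epsilon>\<^sup>2 / (32 * (D + \<epsilon> / 2) * (L + \<epsilon> / R\<^sup>2))"
  assumes convex: "convex_on UNIV G"
    and smooth: "L_smooth L G"
    and b_col: "b \<in> range (\<lambda>x. B *v x)"
    and R_pos: "R > 0" and eps_pos: "\<epsilon> > 0"
    and ustar_feas: "B *v ustar = b"
    and ustar_min: "\<forall>v. B *v v = b \<longrightarrow> G ustar \<le> G v"
    and unu_feas: "B *v unu = b"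
    and unu_min: "\<forall>v. B *v v = b \<longrightarrow> Gnu unu \<le> Gnu v"
    and umin_min: "\<forall>v. G umin \<le> G v"
    and init: "(norm (u0 - ustar))\<^sup>2 \<le> R\<^sup>2"
    and close: "(norm (u - unu))\<^sup>2 \<le> \<delta>"
  shows "G u - G ustar \<le> \<epsilon> \<and> (norm (B *v u - b))\<^sup>2 \<le> \<delta> * (sigma_max B)\<^sup>2"
proof
  have "\<nu> > 0"
    using R_pos eps_pos by (simp add: \<nu>_def)
  have "G unu \<le> Gnu unu"
    using \<open>\<nu> > 0\<close> by (simp add: Gnu_def)
  also have "\<dots> \<le> Gnu ustar"
    using unu_min ustar_feas by blast
  also have "\<dots> \<le> G ustar + \<nu> / 2 * R\<^sup>2"
    using init \<open>\<nu> > 0\<close> by (simp add: Gnu_def)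
  also have "\<nu> / 2 * R\<^sup>2 = \<epsilon> / 2"
    using R_pos by (simp add: \<nu>_def)
  finally have "G unu \<le> G ustar + \<epsilon> / 2" .
  moreover have "G u - G unu \<le> \<epsilon> / 2"
    using smooth _ _ eps_pos _ _ close[unfolded \<delta>_def]
    by (rule L_smooth_increment_le_half)
      (use R_pos eps_pos umin_min \<open>G unu \<le> G ustar + \<epsilon> / 2\<close> in \<open>auto simp: D_def\<close>)
  ultimately show "G u - G ustar \<le> \<epsilon>"
    by linarith
next
  have "B *v u - b = B *v (u - unu)"
    using unu_feas by (simp add: matrix_vector_mult_diff_distrib)
  then have "(norm (B *v u - b))\<^sup>2 \<le> (sigma_max B)\<^sup>2 * (norm (u - unu))\<^sup>2"
    by (simp add: norm_matrix_vector_le_sigma_max)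
  also have "\<dots> \<le> (sigma_max B)\<^sup>2 * \<delta>"
    using close by (simp add: mult_left_mono)
  finally show "(norm (B *v u - b))\<^sup>2 \<le> \<delta> * (sigma_max B)\<^sup>2"
    by (simp add: mult.commute)
qed

end
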